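(* Let $P\subseteq\mathsf{Pos}(R)$, $\alpha\in\Sigma$, let $T$ be the transition tree of $P$, and let $v\in N^\odot(P,\alpha)$ be a node lying on a segment $s$ of $T$ with $v\neq\mathsf{top}(s)$ and $v\neq\mathsf{bot}(s)$. Then $\mathsf{left}(v)$ lies on $s$. Moreover, $v\in\tilde N^\odot(P,\alpha)$ unless either (a) $v$ is $\odot$-dominated by $\mathsf{top}(s)$, or (b) $\mathsf{first}(\mathsf{right}(v))\subseteq\mathsf{first}(\mathsf{top}(s))$ and $\mathsf{top}(s)$ is weakly $\odot$-dominated by some $\odot$-live node of $T$.
   Context: A regular expression $R$ over $\Sigma$ is identified with its parse tree; $\odot$-nodes $v$ have children $\mathsf{left}(v),\mathsf{right}(v)$. Positions are the character-labeled leaves, $\mathsf{Pos}_\alpha$ those labeled $\alpha$. $\mathsf{first}(v)$, $\mathsf{last}(v)$ are the sets of positions occurring first/last in a sequence of positions generated by the subexpression rooted at $v$; $\mathsf{firstextent}(p)=\{v:p\in\mathsf{first}(v)\}$, $\mathsf{lastextent}(p)=\{v:p\in\mathsf{last}(v)\}$, extended to sets by union. $N^\odot(P,\alpha)$ is the set of $\odot$-nodes $v$ with $\mathsf{left}(v)\in\mathsf{lastextent}(P)$ and $\mathsf{right}(v)\in\mathsf{firstextent}(\mathsf{Pos}_\alpha)$. A node $v$ is $\odot$-dominated by $u$ if $u$ is a proper ancestor of $v$ and $\mathsf{first}(\mathsf{right}(v))\subseteq\mathsf{first}(\mathsf{right}(u))$; $\tilde N^\odot(P,\alpha)$ is the set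 of $v\in N^\odot(P,\alpha)$ not $\odot$-dominated by any node of $N^\odot(P,\alpha)$. The transition tree $T$ of $P$ is the subtree induced by the nodes of $P$ and all their ancestors; a branching node of $T$ has two children in $T$; a segment of $T$ is a path from a leaf or branching node of $T$ up to the nearest branching node above it (or the root if none), with top node $\mathsf{top}(s)$ and bottom node $\mathsf{bot}(s)$. A node $v$ is $\odot$-live if it is a $\odot$-node with $\mathsf{left}(v)\in\mathsf{lastextent}(P)$. A node $v$ of $T$ is weakly $\odot$-dominated by $u$ if $u$ is $\odot$-live, $u$ is a proper ancestor of $v$, and $\mathsf{first}(v)\subseteq\mathsf{first}(\mathsf{right}(u))$. *)

theory Defs
  imports Main "HOL-Library.Sublist"
begin

datatype 'a rexp =
    Zero
  | One
  | Atom 'a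
  | Plus "'a rexp" "'a rexp"
  | Times "'a rexp" "'a rexp"
  | Star "'a rexp"

text \<open>Nodes of the parse tree are addressed by paths (lists of child indices);
  child 0 is the left / only child, child 1 the right child.\<close>

type_synonym node = "nat list"

fun subexp :: "'a rexp \<Rightarrow> node \<Rightarrow> 'a rexp option" where
  "subexp r [] = Some r"
| "subexp (Plus r s) (0 # p) = subexp r p"
| "subexp (Plus r s) (Suc 0 # p) = subexp s p"
| "subexp (Times r s) (0 # p) = subexp r p"
| "subexp (Times r s) (Suc 0 # p) = subexp s p"
| "subexp (Star r) (0 # p) = subexp r p"
| "subexp _ _ = None"

definition nodes :: "'a rexp \<Rightarrow> node set" where
  "nodes R = {p. subexp R p \<noteq> None}"

definition is_times :: "'a rexp \<Rightarrow> node \<Rightarrow> bool" where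
  "is_times R v \<longleftrightarrow> (\<exists>r s. subexp R v = Some (Times r s))"

definition left :: "node \<Rightarrow> node" where "left v = v @ [0]"
definition right :: "node \<Rightarrow> node" where "right v = v @ [1]"

definition Pos :: "'a rexp \<Rightarrow> node set" where
  "Pos R = {p. \<exists>a. subexp R p = Some (Atom a)}"

definition Pos_sym :: "'a rexp \<Rightarrow> 'a \<Rightarrow> node set" where
  "Pos_sym R a = {p. subexp R p = Some (Atom a)}"

definition conc :: "'b list set \<Rightarrow> 'b list set \<Rightarrow> 'b list set" where
  "conc A B = {xs @ ys | xs ys. xs \<in> A \<and> ys \<in> B}"

inductive_set kstar :: "'b list set \<Rightarrow> 'b list set" for A where
  kstar_Nil: "[] \<in> kstar A"
| kstar_app: "xs \<in> A \<Longrightarrow> ys \<in> kstar A \<Longrightarrow> xs @ ys \<in> kstar A"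

text \<open>Language of position sequences (positions relative to the root of the expression).\<close>
fun plang :: "'a rexp \<Rightarrow> node list set" where
  "plang Zero = {}"
| "plang One = {[]}"
| "plang (Atom a) = {[[]]}"
| "plang (Plus r s) = map ((#) 0) ` plang r \<union> map ((#) 1) ` plang s"
| "plang (Times r s) = conc (map ((#) 0) ` plang r) (map ((#) 1) ` plang s)"
| "plang (Star r) = kstar (map ((#) 0) ` plang r)"

definition gen :: "'a rexp \<Rightarrow> node \<Rightarrow> node list set" where
  "gen R v = (case subexp R v of None \<Rightarrow> {} | Some r \<Rightarrow> map (\<lambda>q. v @ q) ` plang r)"

definition first :: "'a rexp \<Rightarrow> node \<Rightarrow> node set" where
  "first R v = {hd w | w. w \<in> gen R v \<and> w \<noteq> []}"

definition last :: "'a rexp \<Rightarrow> node \<Rightarrow> node set" where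
  "last R v = {List.last w | w. w \<in> gen R v \<and> w \<noteq> []}"

definition firstextent :: "'a rexp \<Rightarrow> node set \<Rightarrow> node set" where
  "firstextent R P = {v \<in> nodes R. \<exists>p\<in>P. p \<in> first R v}"

definition lastextent :: "'a rexp \<Rightarrow> node set \<Rightarrow> node set" where
  "lastextent R P = {v \<in> nodes R. \<exists>p\<in>P. p \<in> last R v}"

definition Nodot :: "'a rexp \<Rightarrow> node set \<Rightarrow> 'a \<Rightarrow> node set" where
  "Nodot R P a = {v. is_times R v \<and> left v \<in> lastextent R P
                     \<and> right v \<in> firstextent R (Pos_sym R a)}"

definition proper_anc :: "node \<Rightarrow> node \<Rightarrow> bool" where
  "proper_anc u v \<longleftrightarrow> strict_prefix u v"

definition odot_dominated :: "'a rexp \<Rightarrow> node \<Rightarrow> node \<Rightarrow> bool" where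
  "odot_dominated R u v \<longleftrightarrow> is_times R u \<and> is_times R v \<and> proper_anc u v
      \<and> first R (right v) \<subseteq> first R (right u)"

definition Nodot_tilde :: "'a rexp \<Rightarrow> node set \<Rightarrow> 'a \<Rightarrow> node set" where
  "Nodot_tilde R P a = {v \<in> Nodot R P a. \<not> (\<exists>u \<in> Nodot R P a. odot_dominated R u v)}"

definition ttree :: "node set \<Rightarrow> node set" where
  "ttree P = {u. \<exists>p\<in>P. prefix u p}"

definition branching :: "node set \<Rightarrow> node \<Rightarrow> bool" where
  "branching T u \<longleftrightarrow> u \<in> T \<and> u @ [0] \<in> T \<and> u @ [1] \<in> T"

definition tleaf :: "node set \<Rightarrow> node \<Rightarrow> bool" where
  "tleaf T u \<longleftrightarrow> u \<in> T \<and> (\<forall>i. u @ [i] \<notin> T)"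

text \<open>The segment with bottom node b: b is a leaf or branching node of T, and its
  top node is the nearest proper ancestor of b that is branching in T, or the root
  if there is none.\<close>
definition segment :: "node set \<Rightarrow> node \<Rightarrow> node \<Rightarrow> bool" where
  "segment T t b \<longleftrightarrow> (tleaf T b \<or> branching T b) \<and>
     (if (\<exists>u. strict_prefix u b \<and> branching T u)
      then strict_prefix t b \<and> branching T t
           \<and> (\<forall>u. strict_prefix u b \<and> branching T u \<longrightarrow> prefix u t)
      else t = [])"

definition on_segment :: "node \<Rightarrow> node \<Rightarrow> node \<Rightarrow> bool" where
  "on_segment t b v \<longleftrightarrow> prefix t v \<and> prefix v b"

definition odot_live :: "'a rexp \<Rightarrow> node set \<Rightarrow> node \<Rightarrow> bool" where
  "odot_live R P v \<longleftrightarrow> is_times R v \<and> left v \<in> lastextent R P"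

definition weakly_dominated :: "'a rexp \<Rightarrow> node set \<Rightarrow> node \<Rightarrow> node \<Rightarrow> bool" where
  "weakly_dominated R P u v \<longleftrightarrow> v \<in> ttree P \<and> odot_live R P u \<and> proper_anc u v
      \<and> first R v \<subseteq> first R (right u)"

end

theory Submission
  imports Defs
begin

text \<open>An interior node of a segment has a single child in the transition tree; for a live
  concatenation node this is its left child, whose last positions lie in \<open>P\<close>. If \<open>v\<close> is
  \<open>\<odot>\<close>-dominated by some \<open>u\<close>, the first positions of \<open>right v\<close> are first positions of
  \<open>right u\<close>, so \<open>v\<close> lies below \<open>right u\<close>. Hence \<open>u\<close> cannot be an interior node of the
  segment (both of its children would lead to the bottom), \<open>u = top s\<close> is case (a), and if \<open>u\<close>
  lies above \<open>top s\<close> then locality of first sets (the first positions of \<open>right u\<close> below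
  \<open>top s\<close> are either none or all of \<open>first (top s)\<close>) gives case (b) with \<open>u\<close> as witness.\<close>

definition rexp_first :: "'a rexp \<Rightarrow> node set" where
  "rexp_first r = {hd w | w. w \<in> plang r \<and> w \<noteq> []}"

lemma rexp_first_Plus: "rexp_first (Plus r s) = (#) 0 ` rexp_first r \<union> (#) 1 ` rexp_first s"
  by (auto simp: rexp_first_def hd_map) (metis hd_map image_eqI list.map_disc_iff)+

lemma rexp_first_Times:
  "rexp_first (Times r s) =
     {0 # p | p. p \<in> rexp_first r \<and> plang s \<noteq> {}} \<union> {1 # p | p. p \<in> rexp_first s \<and> [] \<in> plang r}"
  (is "?L = ?R")
proof
  show "?L \<subseteq> ?R"
  proof
    fix q assume "q \<in> ?L"
    then obtain x y where "x \<in> plang r" "y \<in> plang s"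
      "map ((#) 0) x @ map ((#) 1) y \<noteq> []" "q = hd (map ((#) 0) x @ map ((#) 1) y)"
      by (auto simp: rexp_first_def conc_def)
    then show "q \<in> ?R" by (cases "x = []") (auto simp: rexp_first_def hd_map)
  qed
  show "?R \<subseteq> ?L"
  proof
    fix q assume "q \<in> ?R"
    then consider x y where "x \<in> plang r" "x \<noteq> []" "y \<in> plang s" "q = 0 # hd x"
      | y where "[] \<in> plang r" "y \<in> plang s" "y \<noteq> []" "q = 1 # hd y"
      by (auto simp: rexp_first_def)
    then show "q \<in> ?L"
    proof cases
      case (1 x y)
      then show ?thesis unfolding rexp_first_def
        by (intro CollectI exI[of _ "map ((#) 0) x @ map ((#) 1) y"]) (auto simp: conc_def hd_map)
    next
      case (2 y)
      then show ?thesis unfolding rexp_first_def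
        by (intro CollectI exI[of _ "map ((#) 1) y"]) (force simp: conc_def hd_map)
    qed
  qed
qed

lemma kstar_hd: "w \<in> kstar A \<Longrightarrow> w \<noteq> [] \<Longrightarrow> \<exists>x\<in>A. x \<noteq> [] \<and> hd x = hd w"
  by (induction rule: kstar.induct) (auto, metis append_Nil hd_append2)

lemma rexp_first_Star: "rexp_first (Star r) = (#) 0 ` rexp_first r"
proof
  show "rexp_first (Star r) \<subseteq> (#) 0 ` rexp_first r"
  proof
    fix q assume "q \<in> rexp_first (Star r)"
    then obtain w where "w \<in> kstar (map ((#) 0) ` plang r)" "w \<noteq> []" "q = hd w"
      by (auto simp: rexp_first_def)
    from kstar_hd[OF this(1,2)] this(3) obtain x where "x \<in> plang r" "x \<noteq> []" "q = 0 # hd x"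
      by (auto simp: hd_map)
    then show "q \<in> (#) 0 ` rexp_first r" by (auto simp: rexp_first_def)
  qed
  show "(#) 0 ` rexp_first r \<subseteq> rexp_first (Star r)"
  proof
    fix q assume "q \<in> (#) 0 ` rexp_first r"
    then obtain x where x: "x \<in> plang r" "x \<noteq> []" "q = 0 # hd x" by (auto simp: rexp_first_def)
    then have "map ((#) 0) x @ [] \<in> kstar (map ((#) 0) ` plang r)"
      by (intro kstar_app kstar_Nil) auto
    then show "q \<in> rexp_first (Star r)" unfolding rexp_first_def using x
      by (intro CollectI exI[of _ "map ((#) 0) x"]) (auto simp: hd_map)
  qed
qed

lemma rexp_first_child_cases:
  assumes "subexp r [i] = Some s"
  shows "{q \<in> rexp_first r. prefix [i] q} = {}
    \<or> {q \<in> rexp_first r. prefix [i] q} = (#) i ` rexp_first s"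
  using assms
proof (cases "(r, [i])" rule: subexp.cases)
  case (4 r1 r2)
  show ?thesis using assms 4 by (cases "plang r2 = {}") (auto simp: rexp_first_Times)
next
  case (5 r1 r2)
  show ?thesis using assms 5 by (cases "[] \<in> plang r1") (auto simp: rexp_first_Times)
qed (auto simp: rexp_first_Plus rexp_first_Star)

lemma subexp_append:
  "subexp r (c @ d) = (case subexp r c of None \<Rightarrow> None | Some s \<Rightarrow> subexp s d)"
  by (induction r c rule: subexp.induct) auto

lemma rexp_first_subexp_cases:
  assumes "subexp r c = Some s"
  shows "{q \<in> rexp_first r. prefix c q} = {}
    \<or> {q \<in> rexp_first r. prefix c q} = (@) c ` rexp_first s"
  using assms
proof (induction c arbitrary: r)
  case Nil
  then show ?case by auto
next
  case (Cons i c)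
  obtain r' where r': "subexp r [i] = Some r'" "subexp r' c = Some s"
    using Cons.prems subexp_append[of r "[i]" c] by (auto split: option.splits)
  have below: "{q \<in> rexp_first r. prefix (i # c) q} = {q \<in> {q \<in> rexp_first r. prefix [i] q}. prefix (i # c) q}"
    using prefix_order.trans[of "[i]" "i # c"] by auto
  from rexp_first_child_cases[OF r'(1)] show ?case
  proof
    assume "{q \<in> rexp_first r. prefix [i] q} = {}"
    then show ?case by (simp only: below) simp
  next
    assume "{q \<in> rexp_first r. prefix [i] q} = (#) i ` rexp_first r'"
    then have "{q \<in> rexp_first r. prefix (i # c) q} = (#) i ` {q \<in> rexp_first r'. prefix c q}"
      by (simp only: below) auto
    with Cons.IH[OF r'(2)] show ?case by (auto simp: image_image)
  qed
qed

lemma first_subexp: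
  assumes "subexp R v = Some r"
  shows "first R v = (@) v ` rexp_first r"
proof
  show "first R v \<subseteq> (@) v ` rexp_first r"
    using assms by (auto simp: first_def gen_def rexp_first_def hd_map)
  show "(@) v ` rexp_first r \<subseteq> first R v"
  proof
    fix p assume "p \<in> (@) v ` rexp_first r"
    then obtain w where "w \<in> plang r" "w \<noteq> []" "p = v @ hd w"
      by (auto simp: rexp_first_def)
    then show "p \<in> first R v" using assms unfolding first_def gen_def
      by (intro CollectI exI[of _ "map ((@) v) w"]) (auto simp: hd_map)
  qed
qed

lemma first_prefix:
  assumes "p \<in> first R v"
  shows "prefix v p"
proof (cases "subexp R v")
  case None
  then show ?thesis using assms by (simp add: first_def gen_def)
next
  case Some
  then show ?thesis using assms by (auto simp: first_subexp)
qed

lemma last_prefix: "p \<in> last R v \<Longrightarrow> prefix v p"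
  by (auto simp: last_def gen_def split: option.splits) (metis last_map prefixI)

lemma first_below_cases:
  assumes "prefix a c" and "subexp R c \<noteq> None"
  shows "{p \<in> first R a. prefix c p} = {} \<or> {p \<in> first R a. prefix c p} = first R c"
proof -
  obtain d where c: "c = a @ d" using assms(1) by (auto simp: prefix_def)
  obtain r s where r: "subexp R a = Some r" and s: "subexp r d = Some s"
    using assms(2) c by (auto simp: subexp_append split: option.splits)
  have "{p \<in> first R a. prefix c p} = (@) a ` {q \<in> rexp_first r. prefix d q}"
    using c by (auto simp: first_subexp[OF r])
  moreover have "first R c = (@) a ` ((@) d ` rexp_first s)"
    using c r s by (simp add: first_subexp subexp_append image_image)
  ultimately show ?thesis
    using rexp_first_subexp_cases[OF s] by (metis image_empty)
qed

lemma ttree_prefix_closed: "u \<in> ttree P \<Longrightarrow> prefix w u \<Longrightarrow> w \<in> ttree P"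
  by (auto simp: ttree_def intro: prefix_order.trans)

lemma subexp_ttree: "P \<subseteq> Pos R \<Longrightarrow> u \<in> ttree P \<Longrightarrow> subexp R u \<noteq> None"
  by (auto simp: ttree_def Pos_def prefix_def subexp_append split: option.splits)

lemma lastextent_ttree: "v \<in> lastextent R P \<Longrightarrow> v \<in> ttree P"
  by (auto simp: lastextent_def ttree_def dest: last_prefix)

lemma segment_bot_in: "segment T t b \<Longrightarrow> b \<in> T"
  by (auto simp: segment_def tleaf_def branching_def)

lemma segment_interior_not_branching:
  assumes "segment T t b" and "prefix t v" and "strict_prefix v b" and "v \<noteq> t"
  shows "\<not> branching T v"
proof
  assume "branching T v"
  with assms have "prefix v t" by (auto simp: segment_def split: if_splits)
  with assms(2,4) show False by simp
qed

lemma subexp_Times_child: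
  assumes "subexp R v = Some (Times r s)" and "subexp R (v @ [i]) \<noteq> None"
  shows "i = 0 \<or> i = 1"
  using assms by (cases i; cases "i - 1") (auto simp: subexp_append)

lemma Nodot_odot_live: "v \<in> Nodot R P \<alpha> \<Longrightarrow> odot_live R P v"
  by (simp add: Nodot_def odot_live_def)

lemma left_on_segment:
  assumes P: "P \<subseteq> Pos R" and seg: "segment (ttree P) t b"
    and live: "odot_live R P v"
    and on: "on_segment t b v" and "v \<noteq> t" and "v \<noteq> b"
  shows "on_segment t b (left v)"
proof -
  have tv: "prefix t v" and vb: "strict_prefix v b"
    using on \<open>v \<noteq> b\<close> by (auto simp: on_segment_def)
  have bT: "b \<in> ttree P" using segment_bot_in[OF seg] .
  obtain i rest where b: "b = v @ i # rest"
    using vb by (metis prefix_def strict_prefix_def append_Nil2 neq_Nil_conv)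
  have iT: "v @ [i] \<in> ttree P" using ttree_prefix_closed[OF bT] b by auto
  have "left v \<in> ttree P" using live by (auto simp: odot_live_def dest: lastextent_ttree)
  moreover have "v \<in> ttree P" using ttree_prefix_closed[OF bT] vb by auto
  ultimately have "right v \<notin> ttree P"
    using segment_interior_not_branching[OF seg tv vb \<open>v \<noteq> t\<close>]
    by (auto simp: branching_def left_def right_def)
  moreover obtain r s where "subexp R v = Some (Times r s)"
    using live by (auto simp: odot_live_def is_times_def)
  then have "i = 0 \<or> i = 1" using subexp_Times_child subexp_ttree[OF P iT] by blast
  ultimately have "i = 0" using iT by (auto simp: right_def)
  then show ?thesis using b tv by (simp add: on_segment_def left_def)
qed

lemma odot_dominated_right_prefix:
  assumes "odot_dominated R u v" and "first R (right v) \<noteq> {}"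
  shows "prefix (right u) v"
proof -
  obtain p where p: "p \<in> first R (right v)" using assms(2) by blast
  then have "p \<in> first R (right u)" using assms(1) by (auto simp: odot_dominated_def)
  then have "prefix (right u) p" by (rule first_prefix)
  moreover have "prefix v p"
    using first_prefix[OF p] by (auto simp: right_def prefix_def)
  ultimately have "prefix (right u) v \<or> prefix v (right u)"
    by (rule prefix_same_cases)
  moreover have "strict_prefix u v"
    using assms(1) by (simp add: odot_dominated_def proper_anc_def)
  ultimately show ?thesis by (auto simp: right_def prefix_snoc)
qed

lemma dominator_not_inside_segment:
  assumes P: "P \<subseteq> Pos R" and seg: "segment (ttree P) t b"
    and dom: "odot_dominated R u v" and live: "odot_live R P u"
    and tu: "strict_prefix t u" and vb: "strict_prefix v b"
    and nonempty: "first R (right v) \<noteq> {}"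
  shows False
proof -
  have ub: "strict_prefix u b"
    using dom vb by (auto simp: odot_dominated_def proper_anc_def)
  have "on_segment t b (left u)"
    by (rule left_on_segment[OF P seg live]) (use tu ub in \<open>auto simp: on_segment_def\<close>)
  then have "prefix (left u) b" by (simp add: on_segment_def)
  moreover have "prefix (right u) b"
    using odot_dominated_right_prefix[OF dom nonempty] vb by (auto intro: prefix_order.trans)
  ultimately have "prefix (left u) (right u) \<or> prefix (right u) (left u)"
    by (rule prefix_same_cases)
  then show False by (auto simp: left_def right_def prefix_snoc dest: prefix_length_le)
qed

lemma dominator_above_top:
  assumes P: "P \<subseteq> Pos R" and tT: "t \<in> ttree P"
    and dom: "odot_dominated R u v" and live: "odot_live R P u"
    and ut: "strict_prefix u t" and tv: "prefix t v"
    and nonempty: "first R (right v) \<noteq> {}"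
  shows "first R (right v) \<subseteq> first R t \<and> weakly_dominated R P u t"
proof -
  have "prefix (right u) v" using odot_dominated_right_prefix[OF dom nonempty] .
  then have "prefix (right u) t \<or> prefix t (right u)"
    using tv by (rule prefix_same_cases)
  then have "prefix (right u) t" using ut by (auto simp: right_def prefix_snoc)
  note below = first_below_cases[OF this subexp_ttree[OF P tT]]
  have "first R (right v) \<subseteq> {p \<in> first R (right u). prefix t p}"
  proof
    fix p assume p: "p \<in> first R (right v)"
    then have "p \<in> first R (right u)" using dom by (auto simp: odot_dominated_def)
    moreover have "prefix v p"
      using first_prefix[OF p] by (auto simp: right_def prefix_def)
    ultimately show "p \<in> {p \<in> first R (right u). prefix t p}"
      using tv by (auto intro: prefix_order.trans)
  qed
  with below nonempty have "{p \<in> first R (right u). prefix t p} = first R t"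
    by blast
  then have "first R (right v) \<subseteq> first R t" and "first R t \<subseteq> first R (right u)"
    using \<open>first R (right v) \<subseteq> _\<close> by auto
  with tT live ut show ?thesis
    by (simp add: weakly_dominated_def proper_anc_def)
qed

theorem lemma7:
  fixes R :: "'a rexp" and P :: "node set" and \<alpha> :: 'a and t b v :: node
  assumes "P \<subseteq> Pos R"
    and "segment (ttree P) t b"
    and "v \<in> Nodot R P \<alpha>"
    and "on_segment t b v" and "v \<noteq> t" and "v \<noteq> b"
  shows "on_segment t b (left v) \<and>
         (v \<in> Nodot_tilde R P \<alpha>
          \<or> odot_dominated R t v
          \<or> (first R (right v) \<subseteq> first R t
             \<and> (\<exists>u \<in> ttree P. odot_live R P u \<and> weakly_dominated R P u t)))"
proof -
  note P = assms(1) and seg = assms(2)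
  have left: "on_segment t b (left v)"
    using left_on_segment[OF P seg Nodot_odot_live[OF assms(3)] assms(4-6)] .
  have tv: "prefix t v" and vb: "strict_prefix v b"
    using assms(4,6) by (auto simp: on_segment_def)
  have tT: "t \<in> ttree P"
    using ttree_prefix_closed[OF segment_bot_in[OF seg]] tv vb by auto
  have nonempty: "first R (right v) \<noteq> {}"
    using assms(3) by (auto simp: Nodot_def firstextent_def)
  show ?thesis
  proof (cases "v \<in> Nodot_tilde R P \<alpha>")
    case False
    then obtain u where dom: "odot_dominated R u v" and live: "odot_live R P u"
      using assms(3) by (auto simp: Nodot_tilde_def Nodot_odot_live)
    have "prefix u t \<or> prefix t u"
      using dom tv prefix_same_cases[of u v t]
      by (auto simp: odot_dominated_def proper_anc_def strict_prefix_def)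
    then consider "u = t" | "strict_prefix t u" | "strict_prefix u t"
      by (metis strict_prefix_def)
    then show ?thesis
    proof cases
      case 1
      then show ?thesis using dom left by blast
    next
      case 2
      then show ?thesis using dominator_not_inside_segment[OF P seg dom live _ vb nonempty] by blast
    next
      case 3
      then have "u \<in> ttree P" using ttree_prefix_closed[OF tT] by (simp add: strict_prefix_def)
      then show ?thesis using dominator_above_top[OF P tT dom live 3 tv nonempty] live left by blast
    qed
  qed (use left in blast)
qed

end
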